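(* Let $(u_n)_{n\in\mathbb Z}$ be a 4-chain and $i\in\mathbb Z$. If $1<|u_i|<|u_{i+1}|$, then $|u_{i+2}|>|u_{i+1}|$. If $|u_i|>|u_{i+1}|>1$, then $|u_{i-1}|>|u_i|$. Consequently, if a 4-chain has no term of absolute value $1$ (and no two consecutive terms of equal absolute value), it has a unique term $u_0$ of least absolute value (after reindexing), and $\cdots>|u_{-2}|>|u_{-1}|>|u_0|<|u_1|<|u_2|<\cdots$.
   Context: A 4-chain is a bi-infinite sequence of integers $(u_n)_{n\in\mathbb Z}$ satisfying $u_{n-1}u_{n+1}=u_n^3+u_n^{f(n)}+1$ for all $n\in\mathbb Z$, where $f(n)=1$ if $n\equiv 0,3\pmod 4$ and $f(n)=2$ if $n\equiv 1,2\pmod 4$. *)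

theory Defs
  imports Main
begin

definition chain_exp :: "int \<Rightarrow> nat" where
  "chain_exp n = (if n mod 4 = 0 \<or> n mod 4 = 3 then 1 else 2)"

definition four_chain :: "(int \<Rightarrow> int) \<Rightarrow> bool" where
  "four_chain u \<longleftrightarrow> (\<forall>n. u (n - 1) * u (n + 1) = u n ^ 3 + u n ^ chain_exp n + 1)"

end

theory Submission
  imports Defs
begin

text \<open>
  If \<open>a c = b\<^sup>3 + b\<^sup>e + 1\<close> with \<open>e \<le> 2\<close> and \<open>|a| < |b|\<close>, then \<open>|c| \<le> |b|\<close> would give
  \<open>|b|\<^sup>3 - |b|\<^sup>2 - 1 \<le> |a c| \<le> (|b| - 1) |b|\<close>, which fails as soon as \<open>|b| \<ge> 2\<close>.
\<close>

lemma abs_cubic_factor_grows: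
  fixes a b c :: int and e :: nat
  assumes eq: "a * c = b ^ 3 + b ^ e + 1" and "e \<le> 2"
    and ab: "\<bar>a\<bar> < \<bar>b\<bar>" and b2: "2 \<le> \<bar>b\<bar>"
  shows "\<bar>b\<bar> < \<bar>c\<bar>"
proof (rule ccontr)
  assume "\<not> \<bar>b\<bar> < \<bar>c\<bar>"
  then have cb: "\<bar>c\<bar> \<le> \<bar>b\<bar>" by simp
  define B where "B = \<bar>b\<bar>"
  have "\<bar>b ^ e\<bar> \<le> B ^ 2"
    unfolding B_def power_abs using \<open>e \<le> 2\<close> b2 by (intro power_increasing) auto
  moreover have "\<bar>b ^ 3\<bar> = B ^ 3" by (simp add: B_def power_abs)
  ultimately have lower: "B ^ 3 - B ^ 2 - 1 \<le> \<bar>a * c\<bar>" using eq by linarith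
  have "\<bar>a * c\<bar> = \<bar>a\<bar> * \<bar>c\<bar>" by (simp add: abs_mult)
  also have "\<dots> \<le> (B - 1) * B" using ab cb by (intro mult_mono) (auto simp: B_def)
  finally have "B * (B - 1) ^ 2 \<le> 1"
    using lower by (simp add: power2_eq_square power3_eq_cube algebra_simps)
  moreover have "2 * 1 \<le> B * (B - 1) ^ 2"
    using b2 by (intro mult_mono) (auto simp: B_def)
  ultimately show False by simp
qed

lemma chain_exp_le_2: "chain_exp n \<le> 2"
  by (simp add: chain_exp_def)

lemma four_chainD:
  "four_chain u \<Longrightarrow> u (n - 1) * u (n + 1) = u n ^ 3 + u n ^ chain_exp n + 1"
  by (simp add: four_chain_def)

lemma four_chain_abs_increasing_step:
  assumes "four_chain u" and "1 < \<bar>u i\<bar>" and "\<bar>u i\<bar> < \<bar>u (i + 1)\<bar>"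
  shows "\<bar>u (i + 1)\<bar> < \<bar>u (i + 2)\<bar>"
proof (rule abs_cubic_factor_grows)
  show "u i * u (i + 2) = u (i + 1) ^ 3 + u (i + 1) ^ chain_exp (i + 1) + 1"
    using four_chainD[OF assms(1), of "i + 1"] by (simp add: add.assoc)
qed (use assms chain_exp_le_2 in auto)

lemma four_chain_abs_decreasing_step:
  assumes "four_chain u" and "\<bar>u (i + 1)\<bar> < \<bar>u i\<bar>" and "1 < \<bar>u (i + 1)\<bar>"
  shows "\<bar>u i\<bar> < \<bar>u (i - 1)\<bar>"
proof (rule abs_cubic_factor_grows)
  show "u (i + 1) * u (i - 1) = u i ^ 3 + u i ^ chain_exp i + 1"
    using four_chainD[OF assms(1), of i] by (simp add: mult.commute)
qed (use assms chain_exp_le_2 in auto)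

lemma four_chain_zero_neighbour:
  assumes "four_chain u" and "u n = 0"
  shows "\<bar>u (n - 1)\<bar> = 1"
proof -
  have "u (n - 1) * u (n + 1) = 1"
    using four_chainD[OF assms(1), of n] assms(2) by (simp add: chain_exp_def)
  then show ?thesis using zmult_eq_1_iff by auto
qed

lemma four_chain_abs_gt_1:
  assumes "four_chain u" and "\<And>n. \<bar>u n\<bar> \<noteq> 1"
  shows "1 < \<bar>u n\<bar>"
proof -
  have "u n \<noteq> 0" using assms four_chain_zero_neighbour by blast
  then show ?thesis using assms(2)[of n] by linarith
qed

lemma increase_propagates_right:
  fixes w :: "int \<Rightarrow> 'a::order"
  assumes up: "\<And>n. w n < w (n + 1) \<Longrightarrow> w (n + 1) < w (n + 2)"
    and "w m < w (m + 1)" and "m \<le> n"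
  shows "w n < w (n + 1)"
  using \<open>m \<le> n\<close>
proof (induction n rule: int_ge_induct)
  case (step i)
  then show ?case using up[of i] by (simp add: add.assoc)
qed (fact assms(2))

lemma decrease_propagates_left:
  fixes w :: "int \<Rightarrow> 'a::order"
  assumes down: "\<And>n. w (n + 1) < w n \<Longrightarrow> w n < w (n - 1)"
    and "w (m + 1) < w m" and "n \<le> m"
  shows "w (n + 1) < w n"
  using \<open>n \<le> m\<close>
proof (induction n rule: int_le_induct)
  case (step i)
  then show ?case using down[of i] by simp
qed (fact assms(2))

lemma less_right_of_increasing:
  fixes w :: "int \<Rightarrow> 'a::order"
  assumes inc: "\<And>n. m \<le> n \<Longrightarrow> w n < w (n + 1)" and "m < n"
  shows "w m < w n"
  using \<open>m < n\<close>
proof (induction n rule: int_gr_induct)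
  case (step i)
  then show ?case using inc[of i] by (meson less_imp_le order.strict_trans)
qed (simp add: inc)

lemma less_left_of_decreasing:
  fixes w :: "int \<Rightarrow> 'a::order"
  assumes dec: "\<And>n. n < m \<Longrightarrow> w (n + 1) < w n" and "n < m"
  shows "w m < w n"
  using \<open>n < m\<close>
proof (induction n rule: int_less_induct)
  case (step i)
  have "w i < w (i - 1)" using dec[of "i - 1"] \<open>i < m\<close> by simp
  with step.IH show ?case by (rule order.strict_trans)
qed (use dec[of "m - 1"] in simp)

text \<open>
  Under the hypotheses below \<open>w\<close> has no local maximum, so it is a valley whose bottom is
  any minimiser of \<open>w\<close>; a minimiser exists because \<open>w\<close> is integer-valued and bounded below.
\<close>

lemma unique_valley:
  fixes w :: "int \<Rightarrow> int"
  assumes "bdd_below (range w)"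
    and neq: "\<And>n. w n \<noteq> w (n + 1)"
    and up: "\<And>n. w n < w (n + 1) \<Longrightarrow> w (n + 1) < w (n + 2)"
    and down: "\<And>n. w (n + 1) < w n \<Longrightarrow> w n < w (n - 1)"
  shows "\<exists>!m. (\<forall>n. n \<noteq> m \<longrightarrow> w m < w n)
              \<and> (\<forall>n. n < m \<longrightarrow> w (n + 1) < w n)
              \<and> (\<forall>n. m \<le> n \<longrightarrow> w n < w (n + 1))"
proof -
  obtain b where lower: "\<And>n. b \<le> w n" using assms(1) by (auto simp: bdd_below_def)
  obtain m where "\<And>n. nat (w m - b) \<le> nat (w n - b)"
    using ex_has_least_nat[of "\<lambda>_. True" 0 "\<lambda>n. nat (w n - b)"] by blast
  with lower have wmin: "w m \<le> w n" for n by (simp add: nat_le_eq_zle)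
  have "w m < w (m + 1)" using wmin[of "m + 1"] neq[of m] by simp
  then have inc: "\<forall>n. m \<le> n \<longrightarrow> w n < w (n + 1)"
    using increase_propagates_right[of w, OF up] by blast
  have "w (m - 1 + 1) < w (m - 1)" using wmin[of "m - 1"] neq[of "m - 1"] by simp
  then have dec: "\<forall>n. n < m \<longrightarrow> w (n + 1) < w n"
    using decrease_propagates_left[of w, OF down, of "m - 1"] by auto
  have strict_min: "\<forall>n. n \<noteq> m \<longrightarrow> w m < w n"
    using less_right_of_increasing[of m w] less_left_of_decreasing[of m w] inc dec
    by (metis linorder_neq_iff)
  show ?thesis
  proof (rule ex1I[of _ m])
    fix m' assume "(\<forall>n. n \<noteq> m' \<longrightarrow> w m' < w n)
                    \<and> (\<forall>n. n < m' \<longrightarrow> w (n + 1) < w n) \<and> (\<forall>n. m' \<le> n \<longrightarrow> w n < w (n + 1))"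
    then show "m' = m" using strict_min by (metis less_asym)
  qed (use strict_min inc dec in blast)
qed

theorem mainTheorem9:
  fixes u :: "int \<Rightarrow> int"
  assumes "four_chain u"
  shows "(\<forall>i. 1 < \<bar>u i\<bar> \<and> \<bar>u i\<bar> < \<bar>u (i + 1)\<bar> \<longrightarrow> \<bar>u (i + 1)\<bar> < \<bar>u (i + 2)\<bar>)
       \<and> (\<forall>i. \<bar>u i\<bar> > \<bar>u (i + 1)\<bar> \<and> \<bar>u (i + 1)\<bar> > 1 \<longrightarrow> \<bar>u i\<bar> < \<bar>u (i - 1)\<bar>)
       \<and> ((\<forall>n. \<bar>u n\<bar> \<noteq> 1) \<and> (\<forall>n. \<bar>u n\<bar> \<noteq> \<bar>u (n + 1)\<bar>) \<longrightarrow>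
           (\<exists>!m. (\<forall>n. n \<noteq> m \<longrightarrow> \<bar>u m\<bar> < \<bar>u n\<bar>)
                 \<and> (\<forall>n. n < m \<longrightarrow> \<bar>u (n + 1)\<bar> < \<bar>u n\<bar>)
                 \<and> (\<forall>n. m \<le> n \<longrightarrow> \<bar>u n\<bar> < \<bar>u (n + 1)\<bar>)))"
proof (intro conjI allI impI)
  fix i
  show "1 < \<bar>u i\<bar> \<and> \<bar>u i\<bar> < \<bar>u (i + 1)\<bar> \<Longrightarrow> \<bar>u (i + 1)\<bar> < \<bar>u (i + 2)\<bar>"
    using four_chain_abs_increasing_step[OF assms] by blast
  show "\<bar>u i\<bar> > \<bar>u (i + 1)\<bar> \<and> \<bar>u (i + 1)\<bar> > 1 \<Longrightarrow> \<bar>u i\<bar> < \<bar>u (i - 1)\<bar>"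
    using four_chain_abs_decreasing_step[OF assms] by blast
next
  assume no_unit: "(\<forall>n. \<bar>u n\<bar> \<noteq> 1) \<and> (\<forall>n. \<bar>u n\<bar> \<noteq> \<bar>u (n + 1)\<bar>)"
  then have gt1: "1 < \<bar>u n\<bar>" for n using four_chain_abs_gt_1[OF assms] by blast
  show "\<exists>!m. (\<forall>n. n \<noteq> m \<longrightarrow> \<bar>u m\<bar> < \<bar>u n\<bar>)
              \<and> (\<forall>n. n < m \<longrightarrow> \<bar>u (n + 1)\<bar> < \<bar>u n\<bar>)
              \<and> (\<forall>n. m \<le> n \<longrightarrow> \<bar>u n\<bar> < \<bar>u (n + 1)\<bar>)"
  proof (rule unique_valley)
    show "bdd_below (range (\<lambda>n. \<bar>u n\<bar>))" by (auto intro: bdd_belowI[of _ 0])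
  qed (use no_unit gt1 four_chain_abs_increasing_step[OF assms]
         four_chain_abs_decreasing_step[OF assms] in auto)
qed

end
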